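(* Let $P$ be a distribution on $\mathcal X\times\{-1,+1\}$ with $\mathcal X\subseteq\mathbb R^d$, let $R>0$, $\mathscr W=\{\mathbf w\in\mathbb R^d:\|\mathbf w\|\le R\}$, and let $\ell:\mathbb R\to\mathbb R_+$ be a convex differentiable loss, with $\mathbf w_*\in\arg\min_{\mathbf w\in\mathscr W}\mathrm E[\ell(y\mathbf w^\top\mathbf x)]$. Suppose (i) there is $q>0$ with $\Pr(y=1\mid\mathbf x)\ge q$ and $\Pr(y=-1\mid\mathbf x)\ge q$ for every $\mathbf x\in\mathcal X$, and (ii) $\ell'(0)>0$. Then Assumption (I) and Assumption (II) hold with a constant $\theta\ge q[\ell'(0)]^2$.
   Context: Assumption (I): there is $\theta>0$ with $\mathrm E[(\ell'(y\mathbf w_*^\top\mathbf x))^2\mathbf x\mathbf x^\top]\succeq\theta\,\mathrm E[\mathbf x\mathbf x^\top]$. Assumption (II): there is $\theta>0$ with $\mathrm E[(\ell'(y\mathbf w^\top\mathbf x))^2\mathbf x\mathbf x^\top]\succeq\theta\,\mathrm E[\mathbf x\mathbf x^\top]$ for all $\mathbf w\in\mathscr W$. Expectations are over $(\mathbf x,y)\sim P$; $\succeq$ is the Loewner order. *)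

theory Defs
  imports "HOL-Probability.Probability"
begin

definition outer :: "real^'d \<Rightarrow> real^'d^'d" where
  "outer x = (\<chi> i j. x $ i * x $ j)"

definition loewner_ge :: "real^'d^'d \<Rightarrow> real^'d^'d \<Rightarrow> bool" where
  "loewner_ge A B \<longleftrightarrow> (\<forall>v. v \<bullet> ((A - B) *v v) \<ge> 0)"

end

theory Submission
  imports Defs
begin

(* Given x, the label is +1 with probability \<eta>(x) and -1 otherwise, so the conditional mean of
   \<ell>'(y w^T x)^2 is \<eta>(x) \<ell>'(t)^2 + (1 - \<eta>(x)) \<ell>'(-t)^2 \<ge> q (\<ell>'(t)^2 + \<ell>'(-t)^2) with t = w^T x.
   Since \<ell>' is monotone, \<ell>'(-|t|) \<le> \<ell>'(0) \<le> \<ell>'(|t|), so one of \<ell>'(t), \<ell>'(-t) is at least as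
   large as \<ell>'(0) in absolute value and the bracket is at least \<ell>'(0)^2. Integrating this bound
   against (v^T x)^2 gives the Loewner inequality for every w, in particular for w_*. *)

lemma convex_on_UNIV_deriv_mono:
  fixes f :: "real \<Rightarrow> real"
  assumes convex: "convex_on UNIV f" and diff: "\<And>t. f differentiable (at t)"
  shows "mono (deriv f)"
proof
  fix s t :: real
  assume "s \<le> t"
  have D: "(f has_field_derivative deriv f u) (at u within UNIV)" for u
    using diff DERIV_deriv_iff_real_differentiable by auto
  have "f t - f s \<ge> deriv f s * (t - s)" and "f s - f t \<ge> deriv f t * (s - t)"
    by (auto intro!: convex_on_imp_above_tangent[OF convex] D)
  then have "(deriv f t - deriv f s) * (t - s) \<ge> 0"
    by (simp add: algebra_simps)
  with \<open>s \<le> t\<close> show "deriv f s \<le> deriv f t"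
    by (cases "s = t") (auto simp: zero_le_mult_iff)
qed

lemma sq_le_sq_add_sq_of_between:
  fixes a b c :: real
  assumes "a \<le> b" "b \<le> c"
  shows "b\<^sup>2 \<le> a\<^sup>2 + c\<^sup>2"
proof (cases "b \<ge> 0")
  case True
  then have "b\<^sup>2 \<le> c\<^sup>2" using assms by (intro power_mono) auto
  then show ?thesis by (simp add: add_increasing)
next
  case False
  then have "(- b)\<^sup>2 \<le> (- a)\<^sup>2" using assms by (intro power_mono) auto
  then show ?thesis by (simp add: add_increasing2)
qed

lemma convex_on_UNIV_deriv_0_sq_le:
  fixes f :: "real \<Rightarrow> real"
  assumes "convex_on UNIV f" and "\<And>t. f differentiable (at t)"
  shows "(deriv f 0)\<^sup>2 \<le> (deriv f t)\<^sup>2 + (deriv f (-t))\<^sup>2"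
proof -
  have mono: "mono (deriv f)"
    using assms by (rule convex_on_UNIV_deriv_mono)
  have "deriv f (- \<bar>t\<bar>) \<le> deriv f 0" "deriv f 0 \<le> deriv f \<bar>t\<bar>"
    by (auto intro: monoD[OF mono])
  then have "(deriv f 0)\<^sup>2 \<le> (deriv f (- \<bar>t\<bar>))\<^sup>2 + (deriv f \<bar>t\<bar>)\<^sup>2"
    by (rule sq_le_sq_add_sq_of_between)
  then show ?thesis
    by (cases "t \<ge> 0") (simp_all add: add.commute)
qed

lemma quadratic_form_scaleR_outer:
  fixes v x :: "real^'d::finite"
  shows "v \<bullet> ((a *\<^sub>R outer x) *v v) = a * (v \<bullet> x)\<^sup>2"
proof -
  have "outer x *v v = (v \<bullet> x) *\<^sub>R x"
    by (simp add: outer_def matrix_vector_mult_def vec_eq_iff inner_vec_def sum_distrib_left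
        sum_distrib_right mult_ac)
  then show ?thesis
    by (simp add: scaleR_matrix_vector_assoc[symmetric] power2_eq_square inner_commute)
qed

lemma bounded_linear_quadratic_form:
  fixes v :: "real^'d::finite"
  shows "bounded_linear (\<lambda>M :: real^'d^'d. v \<bullet> (M *v v))"
  by (intro linear_conv_bounded_linear[THEN iffD1] linearI)
    (simp_all add: matrix_vector_mult_add_rdistrib inner_add_right scaleR_matrix_vector_assoc[symmetric])

lemma quadratic_form_integral:
  fixes F :: "'a \<Rightarrow> real^'d::finite^'d" and v :: "real^'d"
  assumes "integrable M F"
  shows "v \<bullet> ((\<integral>z. F z \<partial>M) *v v) = (\<integral>z. v \<bullet> (F z *v v) \<partial>M)"
    and "integrable M (\<lambda>z. v \<bullet> (F z *v v))"
  using integral_bounded_linear[OF bounded_linear_quadratic_form assms]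
    integrable_bounded_linear[OF bounded_linear_quadratic_form assms]
  by simp_all

locale label_noise =
  fixes P :: "((real^'d::finite) \<times> real) measure"
    and X :: "(real^'d) set" and \<eta> :: "real^'d \<Rightarrow> real" and q :: real
  assumes prob_space: "prob_space P"
    and sets_P: "sets P = sets borel"
    and AE_support: "AE z in P. fst z \<in> X \<and> snd z \<in> {-1, 1}"
    and eta_measurable: "\<eta> \<in> borel_measurable borel"
    and eta_conditional: "\<And>A. A \<in> sets borel \<Longrightarrow>
        measure P (A \<times> {1}) = (\<integral>x. indicator A x * \<eta> x \<partial>(distr P borel fst))"
    and q_pos: "q > 0"
    and eta_ge: "\<And>x. x \<in> X \<Longrightarrow> q \<le> \<eta> x"
    and one_minus_eta_ge: "\<And>x. x \<in> X \<Longrightarrow> q \<le> 1 - \<eta> x"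
begin

sublocale prob_space P
  by (rule prob_space)

definition marginal :: "(real^'d) measure" where
  "marginal = distr P borel fst"

lemma space_P: "space P = UNIV"
  using sets_eq_imp_space_eq[OF sets_P] by simp

lemma measurable_P: "measurable P = measurable borel"
  by (rule ext measurable_cong_sets[OF sets_P refl])+

lemma measurable_P_pair: "measurable P = measurable (borel \<Otimes>\<^sub>M borel)"
  by (simp add: measurable_P borel_prod)

lemma fst_measurable[measurable]: "fst \<in> measurable P borel"
  by (simp add: measurable_P_pair)

lemma snd_measurable[measurable]: "snd \<in> measurable P borel"
  by (simp add: measurable_P_pair)

lemma sets_times_label: "A \<in> sets borel \<Longrightarrow> A \<times> {c} \<in> sets P"
  by (simp add: sets_P borel_prod[symmetric] pair_measureI)

lemma sets_marginal[measurable_cong]: "sets marginal = sets borel"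
  by (simp add: marginal_def)

lemma prob_space_marginal: "prob_space marginal"
  unfolding marginal_def by (rule prob_space_distr) simp

lemma AE_marginal_eta_bounds: "AE x in marginal. q \<le> \<eta> x \<and> q \<le> 1 - \<eta> x"
  unfolding marginal_def
proof (subst AE_distr_iff)
  show "{x \<in> space borel. q \<le> \<eta> x \<and> q \<le> 1 - \<eta> x} \<in> sets borel"
    using eta_measurable by measurable
  show "AE x in P. q \<le> \<eta> (fst x) \<and> q \<le> 1 - \<eta> (fst x)"
    using AE_support by eventually_elim (use eta_ge one_minus_eta_ge in auto)
qed simp

lemma measure_marginal_eq_sum_labels:
  assumes A: "A \<in> sets borel"
  shows "measure marginal A = measure P (A \<times> {1}) + measure P (A \<times> {-1})"
proof -
  have "measure marginal A = measure P (fst -` A \<inter> space P)"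
    unfolding marginal_def using A by (simp add: measure_distr)
  also have "\<dots> = measure P (A \<times> {1} \<union> A \<times> {-1})"
  proof (rule finite_measure_eq_AE)
    show "AE x in P. (x \<in> fst -` A \<inter> space P) = (x \<in> A \<times> {1} \<union> A \<times> {- 1})"
      using AE_support by eventually_elim (auto simp: space_P)
    show "fst -` A \<inter> space P \<in> sets P"
      using A by (simp add: measurable_sets)
  qed (use sets_times_label[OF A] in auto)
  also have "\<dots> = measure P (A \<times> {1}) + measure P (A \<times> {-1})"
    by (rule finite_measure_Union) (auto intro: sets_times_label[OF A])
  finally show ?thesis .
qed

lemma label_measure_ge:
  assumes c: "c \<in> {-1, 1}" and A: "A \<in> sets borel"
  shows "q * measure marginal A \<le> measure P (A \<times> {c})"
proof -
  interpret marginal: prob_space marginal by (rule prob_space_marginal)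
  have integrable_eta: "integrable marginal (\<lambda>x. indicator A x * \<eta> x)"
  proof (rule marginal.integrable_const_bound[where B=1])
    show "AE x in marginal. norm (indicator A x * \<eta> x) \<le> 1"
      using AE_marginal_eta_bounds
      by eventually_elim (use q_pos in \<open>auto simp: indicator_def\<close>)
  qed (use A eta_measurable in measurable)
  have bounds: "q * measure marginal A \<le> (\<integral>x. indicator A x * \<eta> x \<partial>marginal)"
    "(\<integral>x. indicator A x * \<eta> x \<partial>marginal) \<le> (1 - q) * measure marginal A"
  proof -
    have integrable_const: "integrable marginal (\<lambda>x. indicator A x * c)" for c :: real
      using A by (simp add: sets_marginal marginal.emeasure_eq_measure)
    have "(\<integral>x. indicator A x * q \<partial>marginal) \<le> (\<integral>x. indicator A x * \<eta> x \<partial>marginal)"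
      by (rule integral_mono_AE[OF integrable_const integrable_eta])
        (auto intro: eventually_mono[OF AE_marginal_eta_bounds] simp: indicator_def)
    moreover have "(\<integral>x. indicator A x * \<eta> x \<partial>marginal) \<le> (\<integral>x. indicator A x * (1 - q) \<partial>marginal)"
      by (rule integral_mono_AE[OF integrable_eta integrable_const])
        (auto intro: eventually_mono[OF AE_marginal_eta_bounds] simp: indicator_def)
    ultimately show "q * measure marginal A \<le> (\<integral>x. indicator A x * \<eta> x \<partial>marginal)"
      "(\<integral>x. indicator A x * \<eta> x \<partial>marginal) \<le> (1 - q) * measure marginal A"
      using A by (simp_all add: mult.commute)
  qed
  have label_one: "measure P (A \<times> {1}) = (\<integral>x. indicator A x * \<eta> x \<partial>marginal)"
    using eta_conditional[OF A] by (simp add: marginal_def)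
  (* For c = -1 the upper bound on \<eta> enters through P(A \<times> {-1}) = marginal A - P(A \<times> {1}). *)
  from c show ?thesis
    using bounds label_one measure_marginal_eq_sum_labels[OF A] by (auto simp: algebra_simps)
qed

definition label_marginal :: "real \<Rightarrow> (real^'d) measure" where
  "label_marginal c = distr (density P (indicator {z. snd z = c})) borel fst"

lemma sets_label_marginal: "sets (label_marginal c) = sets borel"
  by (simp add: label_marginal_def)

lemma emeasure_label_marginal:
  assumes A: "A \<in> sets borel"
  shows "emeasure (label_marginal c) A = emeasure P (A \<times> {c})"
proof -
  have "emeasure (label_marginal c) A
      = (\<integral>\<^sup>+ z. indicator {z. snd z = c} z * indicator (fst -` A \<inter> space P) z \<partial>P)"
    unfolding label_marginal_def using A by (simp add: emeasure_distr emeasure_density)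
  also have "\<dots> = (\<integral>\<^sup>+ z. indicator (A \<times> {c}) z \<partial>P)"
    by (intro nn_integral_cong) (auto simp: indicator_def space_P)
  also have "\<dots> = emeasure P (A \<times> {c})"
    using sets_times_label[OF A] by simp
  finally show ?thesis .
qed

lemma scaled_marginal_le_label_marginal:
  assumes c: "c \<in> {-1, 1}"
  shows "density marginal (\<lambda>_. ennreal q) \<le> label_marginal c"
proof -
  interpret marginal: prob_space marginal by (rule prob_space_marginal)
  have sets_eq: "sets (density marginal (\<lambda>_. ennreal q)) = sets (label_marginal c)"
    by (simp add: sets_marginal sets_label_marginal)
  have "emeasure (density marginal (\<lambda>_. ennreal q)) A \<le> emeasure (label_marginal c) A" for A
  proof (cases "A \<in> sets borel")
    case A: True
    have "emeasure (density marginal (\<lambda>_. ennreal q)) A = ennreal (q * measure marginal A)"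
      using A q_pos by (simp add: emeasure_density_const sets_marginal marginal.emeasure_eq_measure
          ennreal_mult)
    also have "\<dots> \<le> emeasure P (A \<times> {c})"
      using label_measure_ge[OF c A] by (simp add: emeasure_eq_measure)
    finally show ?thesis
      by (simp add: emeasure_label_marginal[OF A])
  qed (simp add: emeasure_notin_sets sets_marginal)
  then show ?thesis
    using sets_eq sets_eq_imp_space_eq[OF sets_eq] by (simp add: le_measure_iff le_fun_def)
qed

lemma nn_integral_label_ge:
  assumes c: "c \<in> {-1, 1}" and f: "f \<in> borel_measurable borel"
  shows "ennreal q * (\<integral>\<^sup>+ z. f (fst z) \<partial>P) \<le> (\<integral>\<^sup>+ z. indicator {z. snd z = c} z * f (fst z) \<partial>P)"
proof -
  have "ennreal q * (\<integral>\<^sup>+ z. f (fst z) \<partial>P) = (\<integral>\<^sup>+ x. ennreal q * f x \<partial>marginal)"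
    using f by (simp add: marginal_def nn_integral_distr nn_integral_cmult)
  also have "\<dots> = (\<integral>\<^sup>+ x. f x \<partial>density marginal (\<lambda>_. ennreal q))"
    using f by (simp add: nn_integral_density measurable_cong_sets[OF sets_marginal refl])
  also have "\<dots> \<le> (\<integral>\<^sup>+ x. f x \<partial>label_marginal c)"
    by (intro nn_integral_mono_measure scaled_marginal_le_label_marginal c)
      (simp add: sets_marginal sets_label_marginal)
  also have "\<dots> = (\<integral>\<^sup>+ z. indicator {z. snd z = c} z * f (fst z) \<partial>P)"
    using f by (simp add: label_marginal_def nn_integral_distr nn_integral_density)
  finally show ?thesis .
qed

lemma nn_integral_ge_both_labels:
  fixes g :: "(real^'d) \<times> real \<Rightarrow> ennreal"
  assumes g: "g \<in> borel_measurable borel"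
  shows "ennreal q * (\<integral>\<^sup>+ z. g (fst z, 1) + g (fst z, -1) \<partial>P) \<le> (\<integral>\<^sup>+ z. g z \<partial>P)"
proof -
  have g_label[measurable]: "(\<lambda>x. g (x, c)) \<in> borel_measurable borel" for c
    using g by (simp add: borel_prod[symmetric])
  have "ennreal q * (\<integral>\<^sup>+ z. g (fst z, 1) + g (fst z, -1) \<partial>P)
      = ennreal q * (\<integral>\<^sup>+ z. g (fst z, 1) \<partial>P) + ennreal q * (\<integral>\<^sup>+ z. g (fst z, -1) \<partial>P)"
    by (simp add: nn_integral_add distrib_left)
  also have "\<dots> \<le> (\<integral>\<^sup>+ z. indicator {z. snd z = 1} z * g (fst z, 1) \<partial>P)
      + (\<integral>\<^sup>+ z. indicator {z. snd z = -1} z * g (fst z, -1) \<partial>P)"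
    by (intro add_mono nn_integral_label_ge g_label) auto
  also have "\<dots> = (\<integral>\<^sup>+ z. indicator {z. snd z = 1} z * g (fst z, 1)
      + indicator {z. snd z = -1} z * g (fst z, -1) \<partial>P)"
    by (simp add: nn_integral_add)
  also have "\<dots> = (\<integral>\<^sup>+ z. g z \<partial>P)"
    using AE_support by (intro nn_integral_cong_AE, eventually_elim) (auto simp: indicator_def)
  finally show ?thesis .
qed

lemma integral_ge_both_labels:
  fixes g :: "(real^'d) \<times> real \<Rightarrow> real" and h :: "real^'d \<Rightarrow> real"
  assumes g: "integrable P g" "\<And>z. 0 \<le> g z"
    and h: "integrable P (\<lambda>z. h (fst z))" "\<And>x. 0 \<le> h x"
    and h_le: "\<And>x. h x \<le> g (x, 1) + g (x, -1)"
  shows "q * (\<integral>z. h (fst z) \<partial>P) \<le> (\<integral>z. g z \<partial>P)"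
proof -
  have "ennreal (q * (\<integral>z. h (fst z) \<partial>P)) = ennreal q * (\<integral>\<^sup>+ z. h (fst z) \<partial>P)"
    using h q_pos by (simp add: nn_integral_eq_integral ennreal_mult integral_nonneg_AE)
  also have "\<dots> \<le> ennreal q * (\<integral>\<^sup>+ z. ennreal (g (fst z, 1)) + ennreal (g (fst z, -1)) \<partial>P)"
    using g h_le
    by (intro mult_left_mono nn_integral_mono) (simp_all add: ennreal_plus[symmetric] del: ennreal_plus)
  also have "\<dots> \<le> (\<integral>\<^sup>+ z. g z \<partial>P)"
    using borel_measurable_integrable[OF g(1)]
    by (intro nn_integral_ge_both_labels) (simp add: measurable_P)
  also have "\<dots> = ennreal (\<integral>z. g z \<partial>P)"
    using g by (simp add: nn_integral_eq_integral)
  finally show ?thesis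
    using g by (simp add: integral_nonneg_AE)
qed

lemma loewner_ge_integral_scaled_outer:
  fixes \<phi> :: "real \<Rightarrow> real" and w :: "real^'d"
  assumes \<phi>_nonneg: "\<And>t. 0 \<le> \<phi> t" and \<phi>_sum_ge: "\<And>t. c \<le> \<phi> t + \<phi> (-t)" and c: "0 \<le> c"
    and integrable_outer: "integrable P (\<lambda>z. outer (fst z))"
    and integrable_scaled: "integrable P (\<lambda>z. \<phi> (snd z * (w \<bullet> fst z)) *\<^sub>R outer (fst z))"
  shows "loewner_ge (\<integral>z. \<phi> (snd z * (w \<bullet> fst z)) *\<^sub>R outer (fst z) \<partial>P)
    ((q * c) *\<^sub>R (\<integral>z. outer (fst z) \<partial>P))"
  unfolding loewner_ge_def
proof
  fix v :: "real^'d"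
  define g where "g z = \<phi> (snd z * (w \<bullet> fst z)) * (v \<bullet> fst z)\<^sup>2" for z :: "(real^'d) \<times> real"
  define h where "h x = c * (v \<bullet> x)\<^sup>2" for x :: "real^'d"
  have outer: "v \<bullet> ((\<integral>z. outer (fst z) \<partial>P) *v v) = (\<integral>z. (v \<bullet> fst z)\<^sup>2 \<partial>P)"
    "integrable P (\<lambda>z. (v \<bullet> fst z)\<^sup>2)"
    using quadratic_form_integral[OF integrable_outer, of v]
      quadratic_form_scaleR_outer[of v 1] by simp_all
  have scaled: "v \<bullet> ((\<integral>z. \<phi> (snd z * (w \<bullet> fst z)) *\<^sub>R outer (fst z) \<partial>P) *v v) = (\<integral>z. g z \<partial>P)"
    "integrable P g"
    using quadratic_form_integral[OF integrable_scaled, of v]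
    by (simp_all add: quadratic_form_scaleR_outer g_def[abs_def])
  have h_le: "h x \<le> g (x, 1) + g (x, -1)" for x
    using \<phi>_sum_ge[of "w \<bullet> x"] by (simp add: g_def h_def distrib_right[symmetric] mult_right_mono)
  have "q * (\<integral>z. h (fst z) \<partial>P) \<le> (\<integral>z. g z \<partial>P)"
    by (rule integral_ge_both_labels[OF scaled(2) _ _ _ h_le])
      (use outer(2) \<phi>_nonneg c in \<open>simp_all add: g_def h_def\<close>)
  then show "0 \<le> v \<bullet> ((integral\<^sup>L P (\<lambda>z. \<phi> (snd z * (w \<bullet> fst z)) *\<^sub>R outer (fst z))
      - (q * c) *\<^sub>R (\<integral>z. outer (fst z) \<partial>P)) *v v)"
    by (simp add: matrix_vector_mult_diff_rdistrib inner_diff_right scaleR_matrix_vector_assoc[symmetric]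
        scaled(1) outer(1) h_def mult.assoc)
qed

end

theorem lemma1:
  fixes P :: "((real^('d::finite)) \<times> real) measure"
    and X :: "(real^'d) set"
    and R q :: real
    and loss :: "real \<Rightarrow> real"
    and w_star :: "real^'d"
    and \<eta> :: "real^'d \<Rightarrow> real"
  assumes P_prob: "prob_space P"
    and P_sets: "sets P = sets borel"
    and P_supp: "AE z in P. fst z \<in> X \<and> snd z \<in> {-1, 1}"
    and R_pos: "R > 0"
    and loss_nonneg: "\<And>t. loss t \<ge> 0"
    and loss_convex: "convex_on UNIV loss"
    and loss_diff: "\<And>t. loss differentiable (at t)"
    and w_star_in: "norm w_star \<le> R"
    and w_star_min: "\<And>w. norm w \<le> R \<Longrightarrow>
        (\<integral>\<^sup>+ z. ennreal (loss (snd z * (w_star \<bullet> fst z))) \<partial>P)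
          \<le> (\<integral>\<^sup>+ z. ennreal (loss (snd z * (w \<bullet> fst z))) \<partial>P)"
    and eta_meas: "\<eta> \<in> borel_measurable borel"
    and eta_cond: "\<And>A. A \<in> sets borel \<Longrightarrow>
        measure P (A \<times> {1}) = (\<integral>x. indicator A x * \<eta> x \<partial>(distr P borel fst))"
    and q_pos: "q > 0"
    and cond_pos: "\<And>x. x \<in> X \<Longrightarrow> \<eta> x \<ge> q"
    and cond_neg: "\<And>x. x \<in> X \<Longrightarrow> 1 - \<eta> x \<ge> q"
    and deriv0_pos: "deriv loss 0 > 0"
    and int_xx: "integrable P (\<lambda>z. outer (fst z))"
    and int_grad: "\<And>w. norm w \<le> R \<Longrightarrow>
        integrable P (\<lambda>z. (deriv loss (snd z * (w \<bullet> fst z)))\<^sup>2 *\<^sub>R outer (fst z))"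
  shows "\<exists>\<theta>>0. \<theta> \<ge> q * (deriv loss 0)\<^sup>2
    \<and> loewner_ge
        (\<integral>z. (deriv loss (snd z * (w_star \<bullet> fst z)))\<^sup>2 *\<^sub>R outer (fst z) \<partial>P)
        (\<theta> *\<^sub>R (\<integral>z. outer (fst z) \<partial>P))
    \<and> (\<forall>w. norm w \<le> R \<longrightarrow> loewner_ge
        (\<integral>z. (deriv loss (snd z * (w \<bullet> fst z)))\<^sup>2 *\<^sub>R outer (fst z) \<partial>P)
        (\<theta> *\<^sub>R (\<integral>z. outer (fst z) \<partial>P)))"
proof -
  interpret label_noise P X \<eta> q
    by (rule label_noise.intro) (fact P_prob P_sets P_supp eta_meas eta_cond q_pos cond_pos cond_neg)+
  define \<theta> where "\<theta> = q * (deriv loss 0)\<^sup>2"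
  have loewner: "loewner_ge
      (\<integral>z. (deriv loss (snd z * (w \<bullet> fst z)))\<^sup>2 *\<^sub>R outer (fst z) \<partial>P)
      (\<theta> *\<^sub>R (\<integral>z. outer (fst z) \<partial>P))" if "norm w \<le> R" for w
    unfolding \<theta>_def
    using convex_on_UNIV_deriv_0_sq_le[OF loss_convex loss_diff] int_xx int_grad[OF that]
    by (intro loewner_ge_integral_scaled_outer) auto
  have "\<theta> > 0"
    using q_pos deriv0_pos by (simp add: \<theta>_def)
  then show ?thesis
    using loewner[OF w_star_in] loewner by (auto simp: \<theta>_def)
qed

end
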